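(* There exists a constant $C>1$ such that for every positive integer $n$, \[ s(P_n) \leq C \max_{0\leq r \leq n} \left| Q^{(r)}(P_n) \right|. \]
   Context: For a positive integer $n$, $P_n$ is the path on vertex set $[n]=\{1,\dots,n\}$ with edges $\{i,i+1\}$, $1\le i\le n-1$. A set $A\subseteq[n]$ is $P_n$-independent if it contains no two consecutive integers. $Q(P_n)$ is the family of all $P_n$-independent subsets of $[n]$, and $Q^{(r)}(P_n)$ is the family of its members of size $r$. An antichain in $Q(P_n)$ is a subfamily in which no member is a proper subset of another. $s(P_n)$ denotes the maximum size of an antichain in $Q(P_n)$. *)

theory Defs
  imports Complex_Main
begin

text \<open>P_n-independent subsets of [n] = {1..n}: no two consecutive integers.\<close>
definition path_indep :: "nat \<Rightarrow> nat set \<Rightarrow> bool" where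
  "path_indep n A \<longleftrightarrow> A \<subseteq> {1..n} \<and> (\<forall>i\<in>A. Suc i \<notin> A)"

definition Q_path :: "nat \<Rightarrow> nat set set" where
  "Q_path n = {A. path_indep n A}"

definition Q_path_r :: "nat \<Rightarrow> nat \<Rightarrow> nat set set" where
  "Q_path_r n r = {A \<in> Q_path n. card A = r}"

definition is_antichain_in :: "'a set set \<Rightarrow> 'a set set \<Rightarrow> bool" where
  "is_antichain_in F Q \<longleftrightarrow> F \<subseteq> Q \<and> (\<forall>A\<in>F. \<forall>B\<in>F. \<not> A \<subset> B)"

definition s_path :: "nat \<Rightarrow> nat" where
  "s_path n = Max {card F | F. is_antichain_in F (Q_path n)}"

end

theory Submission
  imports Defs
begin

text \<open>Split an independent set of \<open>P_n\<close> into its even part \<open>E\<close> and its odd part. For fixed \<open>E\<close>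
  the odd part ranges over all subsets of the \<open>d_E\<close> odd positions not adjacent to \<open>E\<close>, so by
  Sperner's theorem an antichain contains at most \<open>C(d_E, d_E div 2)\<close> of the \<open>2^d_E\<close> independent
  sets with even part \<open>E\<close>. If \<open>d_E \<ge> n/8\<close> this is \<open>O(2^d_E / \<surd>n)\<close>; the remaining blocks
  contribute at most \<open>2^(5n/8)\<close>, exponentially less than \<open>|Q(P_n)| \<ge> (8/5)^n\<close>. Hence
  \<open>s(P_n) = O(|Q(P_n)| / \<surd>n)\<close>.

  On the other hand \<open>|Q^(r)(P_n)| = C(n + 1 - r, r)\<close>, and the ratio of consecutive layer sizes
  drops by a factor \<open>1 - 2L/(n + 1)\<close> over \<open>L\<close> steps. Taking \<open>L = \<lfloor>\<surd>n\<rfloor>\<close>, the layer sizes decay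
  geometrically beyond distance \<open>L\<close> from a largest layer, so \<open>|Q(P_n)| = O(\<surd>n max_r |Q^(r)(P_n)|)\<close>.\<close>

section \<open>Sperner's theorem\<close>

lemma LYM_inequality:
  assumes "finite U" "is_antichain_in F (Pow U)"
  shows "(\<Sum>A\<in>F. 1 / real (card U choose card A)) \<le> 1"
  using assms
proof (induction "card U" arbitrary: U F)
  case 0
  then have "F \<subseteq> {{}}"
    by (auto simp: is_antichain_in_def)
  then show ?case
    by (cases "F = {}") (auto dest: subset_singletonD)
next
  case (Suc d U F)
  have F: "F \<subseteq> Pow U" "\<And>A B. A \<in> F \<Longrightarrow> B \<in> F \<Longrightarrow> \<not> A \<subset> B"
    using Suc.prems(2) by (auto simp: is_antichain_in_def)
  have finF: "finite F"
    using F(1) Suc.prems(1) by (meson finite_Pow_iff finite_subset)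
  show ?case
  proof (cases "U \<in> F")
    case True
    then have "F = {U}" using F by blast
    then show ?thesis by simp
  next
    case False
    have card_lt: "card A < Suc d" if "A \<in> F" for A
    proof -
      have "A \<subset> U" using that False F(1) by blast
      then show ?thesis using Suc.hyps(2) Suc.prems(1) psubset_card_mono by metis
    qed
    have IH: "(\<Sum>A\<in>{A\<in>F. x \<notin> A}. 1 / real (d choose card A)) \<le> 1" if "x \<in> U" for x
    proof -
      have "card (U - {x}) = d"
        using Suc.hyps(2) that by simp
      moreover have "is_antichain_in {A\<in>F. x \<notin> A} (Pow (U - {x}))"
        using F by (auto simp: is_antichain_in_def)
      ultimately show ?thesis
        using Suc.hyps(1)[of "U - {x}"] Suc.prems(1) by simp
    qed
    \<comment> \<open>Double counting the pairs (x, A) with x \<in> U - A.\<close>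
    have "(\<Sum>A\<in>F. real (Suc d) / real (Suc d choose card A))
        = (\<Sum>A\<in>F. \<Sum>x\<in>{x\<in>U. x \<notin> A}. 1 / real (d choose card A))"
    proof (rule sum.cong[OF refl])
      fix A assume "A \<in> F"
      moreover have "{x\<in>U. x \<notin> A} = U - A"
        by blast
      ultimately have "card {x\<in>U. x \<notin> A} = Suc d - card A" "card A < Suc d"
        using F(1) Suc.hyps(2) Suc.prems(1) card_lt
        by (auto simp: card_Diff_subset finite_subset)
      moreover have "(Suc d choose card A) * (Suc d - card A) = Suc d * (d choose card A)"
        using binomial_absorb_comp[of "Suc d" "card A"] by (simp add: mult.commute)
      then have "real (Suc d choose card A) * real (Suc d - card A) = real (Suc d) * real (d choose card A)"
        by (metis of_nat_mult)
      ultimately show "real (Suc d) / real (Suc d choose card A)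
          = (\<Sum>x\<in>{x\<in>U. x \<notin> A}. 1 / real (d choose card A))"
        by (simp add: field_simps)
    qed
    also have "\<dots> = (\<Sum>x\<in>U. \<Sum>A\<in>{A\<in>F. x \<notin> A}. 1 / real (d choose card A))"
      using sum.swap_restrict[OF Suc.prems(1) finF, of "\<lambda>x A. 1 / real (d choose card A)" "\<lambda>x A. x \<notin> A"]
      by simp
    also have "\<dots> \<le> (\<Sum>x\<in>U. 1)"
      by (rule sum_mono) (rule IH)
    also have "\<dots> = real (Suc d)"
      using Suc.hyps(2) by simp
    finally have "real (Suc d) * (\<Sum>A\<in>F. 1 / real (Suc d choose card A)) \<le> real (Suc d)"
      by (simp add: sum_distrib_left)
    then show ?thesis
      using Suc.hyps(2) by (simp add: mult_le_cancel_left1)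
  qed
qed

theorem sperner:
  assumes "finite U" "is_antichain_in F (Pow U)"
  shows "card F \<le> card U choose (card U div 2)"
proof -
  let ?m = "real (card U choose (card U div 2))"
  have "real (card F) = (\<Sum>A\<in>F. 1)" by simp
  also have "\<dots> \<le> (\<Sum>A\<in>F. ?m / real (card U choose card A))"
  proof (rule sum_mono)
    fix A assume "A \<in> F"
    then have "card A \<le> card U"
      using assms by (auto simp: is_antichain_in_def intro: card_mono)
    then show "1 \<le> ?m / real (card U choose card A)"
      using binomial_maximum[of "card U" "card A"] by (simp add: of_nat_le_iff)
  qed
  also have "\<dots> = ?m * (\<Sum>A\<in>F. 1 / real (card U choose card A))"
    by (simp add: sum_distrib_left)
  also have "\<dots> \<le> ?m"
    using mult_left_mono[OF LYM_inequality[OF assms], of ?m] by simp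
  finally show ?thesis by simp
qed

section \<open>Middle binomial coefficients\<close>

lemma central_binomial_Suc:
  "((2*k+2) choose (k+1)) * (k+1) = 2 * (2*k+1) * ((2*k) choose k)"
proof -
  define c b x where "c = (2*k+2) choose (k+1)" and "b = (2*k) choose k"
    and "x = (2*k+1) choose (k+1)"
  have "(k+1) * c = (2*k+2) * ((2*k+1) choose k)"
    unfolding c_def using Suc_times_binomial[of k "2*k+1"] by (simp only: Suc_eq_plus1 add.assoc one_add_one)
  also have "(2*k+1) choose k = x"
    unfolding x_def using binomial_symmetric[of k "2*k+1"] by simp
  finally have "(k+1) * c = (k+1) * (2 * x)"
    by (simp add: algebra_simps)
  then have "c = 2 * x"
    by (metis mult_left_cancel add_eq_0_iff_both_eq_0 one_neq_zero)
  moreover have "(k+1) * x = (2*k+1) * b"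
    unfolding x_def b_def using Suc_times_binomial[of k "2*k"] by (simp only: Suc_eq_plus1)
  ultimately show ?thesis
    unfolding c_def[symmetric] b_def[symmetric] by (simp add: algebra_simps)
qed

text \<open>The factor \<open>3k + 1\<close> instead of \<open>2k + 1\<close> is what makes the induction go through.\<close>
lemma central_binomial_sq_le: "((2*k) choose k)^2 * (3*k+1) \<le> 16^k"
proof (induction k)
  case 0 then show ?case by simp
next
  case (Suc k)
  let ?b = "(2*k) choose k" and ?c = "(2*k+2) choose (k+1)"
  have "?c^2 * (3*k+4) * (k+1)^2 = (?c*(k+1))^2 * (3*k+4)"
    by (simp add: power2_eq_square algebra_simps)
  also have "\<dots> = 4 * ?b^2 * ((2*k+1)^2 * (3*k+4))"
    by (simp only: central_binomial_Suc) (simp add: power2_eq_square algebra_simps)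
  also have "\<dots> \<le> 4 * ?b^2 * (4*(k+1)^2*(3*k+1))"
    by (intro mult_left_mono) (simp_all add: power2_eq_square algebra_simps)
  also have "\<dots> = 16 * (?b^2 * (3*k+1)) * (k+1)^2"
    by (simp add: algebra_simps)
  also have "\<dots> \<le> 16 * 16^k * (k+1)^2"
    using Suc.IH by (intro mult_right_mono mult_left_mono) simp_all
  finally have "?c^2 * (3*k+4) * (k+1)^2 \<le> 16^(Suc k) * (k+1)^2"
    by (simp only: power_Suc mult.assoc)
  then have "?c^2 * (3*k+4) \<le> 16^(Suc k)"
    by (metis mult_le_cancel2 zero_less_Suc zero_less_power Suc_eq_plus1)
  then show ?case by (simp add: algebra_simps)
qed

lemma middle_binomial_sq_le: "(d choose (d div 2))^2 * (d+1) \<le> 4^d"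
proof (cases "even d")
  case True
  then obtain k where d: "d = 2*k" by blast
  have "((2*k) choose k)^2 * (2*k+1) \<le> ((2*k) choose k)^2 * (3*k+1)"
    by (intro mult_left_mono) simp_all
  also have "\<dots> \<le> 16^k" by (rule central_binomial_sq_le)
  also have "16^k = (4::nat)^(2*k)" by (simp add: power_mult)
  finally show ?thesis using d by simp
next
  case False
  then obtain k where d: "d = 2*k+1" using oddE by blast
  have "(2*k+2) choose (k+1) = 2 * ((2*k+1) choose k)"
    using binomial_Suc_Suc[of "2*k+1" k] binomial_symmetric[of k "2*k+1"] by simp
  then have "4 * (((2*k+1) choose k)^2 * (2*k+2)) \<le> ((2*(k+1)) choose (k+1))^2 * (3*(k+1)+1)"
    by (simp add: power2_eq_square algebra_simps)
  also have "\<dots> \<le> 16^(k+1)" by (rule central_binomial_sq_le)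
  also have "\<dots> = 4 * 4^(2*k+1)" by (simp add: power_mult power_add)
  finally show ?thesis using d by simp
qed

lemma middle_binomial_le: "real (d choose (d div 2)) \<le> 2^d / sqrt (real d + 1)"
proof -
  have "(real (d choose (d div 2)))^2 * (real d + 1) \<le> (2^d)^2"
  proof -
    have "real ((d choose (d div 2))^2 * (d+1)) \<le> real (4^d)"
      using middle_binomial_sq_le of_nat_le_iff by blast
    moreover have "real (4^d) = ((2::real)^d)^2"
      by (simp add: power_mult_distrib[symmetric] power2_eq_square power_even_eq)
    ultimately show ?thesis
      by (simp add: algebra_simps)
  qed
  then have "real (d choose (d div 2)) * sqrt (real d + 1) \<le> 2^d"
    using real_sqrt_le_mono by (fastforce simp: real_sqrt_mult)
  then show ?thesis
    by (simp add: field_simps)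
qed

section \<open>Independent sets of paths\<close>

lemma Q_path_eq: "Q_path n = {A. A \<subseteq> {1..n} \<and> (\<forall>i\<in>A. Suc i \<notin> A)}"
  unfolding Q_path_def path_indep_def by simp

lemma Q_path_subset_Pow: "Q_path n \<subseteq> Pow {1..n}"
  unfolding Q_path_eq by auto

lemma finite_Q_path: "finite (Q_path n)"
  using Q_path_subset_Pow finite_subset by blast

lemma finite_of_mem_Q_path: "A \<in> Q_path n \<Longrightarrow> finite A"
  using Q_path_subset_Pow finite_subset by blast

lemma Q_path_0: "Q_path 0 = {{}}"
  unfolding Q_path_eq by auto

lemma Q_path_1: "Q_path (Suc 0) = {{}, {1}}"
  unfolding Q_path_eq by auto

lemma Q_path_Suc_Suc:
  "Q_path (Suc (Suc m)) = Q_path (Suc m) \<union> insert (Suc (Suc m)) ` Q_path m"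
proof (rule set_eqI, rule iffI)
  fix A assume A: "A \<in> Q_path (Suc (Suc m))"
  show "A \<in> Q_path (Suc m) \<union> insert (Suc (Suc m)) ` Q_path m"
  proof (cases "Suc (Suc m) \<in> A")
    case True
    then have "Suc m \<notin> A" using A unfolding Q_path_eq by auto
    then have "A - {Suc (Suc m)} \<in> Q_path m" using A unfolding Q_path_eq
      by (auto simp: subset_iff) (metis atLeastAtMost_iff le_Suc_eq)
    moreover have "A = insert (Suc (Suc m)) (A - {Suc (Suc m)})" using True by auto
    ultimately show ?thesis by blast
  next
    case False
    then have "A \<in> Q_path (Suc m)" using A unfolding Q_path_eq
      by (auto simp: subset_iff) (metis atLeastAtMost_iff le_Suc_eq)
    then show ?thesis by blast
  qed
next
  fix A assume "A \<in> Q_path (Suc m) \<union> insert (Suc (Suc m)) ` Q_path m"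
  then show "A \<in> Q_path (Suc (Suc m))"
    unfolding Q_path_eq by (auto simp: subset_iff)
qed

lemma Q_path_Suc_disjoint: "Q_path (Suc m) \<inter> insert (Suc (Suc m)) ` Q_path m = {}"
  unfolding Q_path_eq by auto

lemma inj_on_insert_Q_path: "inj_on (insert (Suc (Suc m))) (Q_path m)"
proof (rule inj_onI)
  fix x y assume "x \<in> Q_path m" "y \<in> Q_path m" "insert (Suc (Suc m)) x = insert (Suc (Suc m)) y"
  moreover have "Suc (Suc m) \<notin> x" "Suc (Suc m) \<notin> y"
    using calculation unfolding Q_path_eq by auto
  ultimately show "x = y"
    by (metis Diff_insert_absorb)
qed

lemma card_Q_path_Suc_Suc:
  "card (Q_path (Suc (Suc m))) = card (Q_path (Suc m)) + card (Q_path m)"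
  unfolding Q_path_Suc_Suc
  by (subst card_Un_disjoint)
     (simp_all add: finite_Q_path Q_path_Suc_disjoint card_image[OF inj_on_insert_Q_path])

lemma card_Q_path_ge: "(8/5::real)^n \<le> real (card (Q_path n))"
proof (induction n rule: induct_nat_012)
  case (ge2 k)
  have "(8/5::real)^(Suc (Suc k)) \<le> (8/5)^(Suc k) + (8/5)^k"
    by simp
  also have "\<dots> \<le> real (card (Q_path (Suc k))) + real (card (Q_path k))"
    using ge2.IH by simp
  also have "\<dots> = real (card (Q_path (Suc (Suc k))))"
    by (simp add: card_Q_path_Suc_Suc)
  finally show ?case .
qed (simp_all add: Q_path_0 Q_path_1)

lemma Q_path_r_0: "Q_path_r n 0 = {{}}"
  unfolding Q_path_r_def using finite_of_mem_Q_path by (auto simp: Q_path_eq)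

lemma Q_path_r_Suc_Suc:
  "Q_path_r (Suc (Suc m)) (Suc i) = Q_path_r (Suc m) (Suc i) \<union> insert (Suc (Suc m)) ` Q_path_r m i"
proof -
  have "\<And>A. A \<in> Q_path m \<Longrightarrow> Suc (Suc m) \<notin> A"
    unfolding Q_path_eq by auto
  then show ?thesis
    unfolding Q_path_r_def Q_path_Suc_Suc using finite_of_mem_Q_path by (auto simp: card_insert_if)
qed

lemma card_Q_path_r_Suc_Suc:
  "card (Q_path_r (Suc (Suc m)) (Suc i)) = card (Q_path_r (Suc m) (Suc i)) + card (Q_path_r m i)"
proof -
  have "Q_path_r (Suc m) (Suc i) \<inter> insert (Suc (Suc m)) ` Q_path_r m i = {}"
    using Q_path_Suc_disjoint[of m] unfolding Q_path_r_def by blast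
  moreover have "inj_on (insert (Suc (Suc m))) (Q_path_r m i)"
    using inj_on_insert_Q_path by (rule inj_on_subset) (simp add: Q_path_r_def)
  ultimately show ?thesis
    unfolding Q_path_r_Suc_Suc using finite_Q_path
    by (subst card_Un_disjoint) (auto simp: Q_path_r_def card_image)
qed

lemma card_Q_path_r: "card (Q_path_r n r) = (n + 1 - r) choose r"
proof (induction n arbitrary: r rule: induct_nat_012)
  case 0
  have "Q_path_r 0 r = (if r = 0 then {{}} else {})"
    by (auto simp: Q_path_r_def Q_path_0)
  then show ?case by simp
next
  case 1
  have "Q_path_r (Suc 0) r = (if r = 0 then {{}} else if r = 1 then {{1}} else {})"
    by (auto simp: Q_path_r_def Q_path_1)
  then show ?case by (cases r) auto
next
  case (ge2 m)
  show ?case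
  proof (cases r)
    case (Suc i)
    then show ?thesis
      using ge2.IH by (cases "i \<le> m + 1") (auto simp: card_Q_path_r_Suc_Suc Suc_diff_le)
  qed (simp add: Q_path_r_0)
qed

section \<open>Decomposition by the even part\<close>

definition evens :: "nat \<Rightarrow> nat set" where
  "evens n = {i\<in>{1..n}. even i}"

definition free_odds :: "nat \<Rightarrow> nat set \<Rightarrow> nat set" where
  "free_odds n E = {i\<in>{1..n}. odd i \<and> i - 1 \<notin> E \<and> Suc i \<notin> E}"

lemma finite_evens: "finite (evens n)"
  unfolding evens_def by simp

lemma finite_free_odds: "finite (free_odds n E)"
  unfolding free_odds_def by simp

lemma card_evens: "card (evens n) = n div 2"
proof -
  have "evens n = (\<lambda>j. 2*j) ` {1..n div 2}"
    unfolding evens_def by (auto simp: image_iff elim!: evenE)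
  moreover have "inj_on (\<lambda>j. 2*j) {1..n div 2}"
    by (auto simp: inj_on_def)
  ultimately show ?thesis
    by (simp add: card_image)
qed

lemma card_eq_sum_card_fibres:
  assumes "finite S" "finite T" "g ` S \<subseteq> T"
  shows "card S = (\<Sum>y\<in>T. card {x \<in> S. g x = y})"
  using sum.group[OF assms, of "\<lambda>_. 1::nat"] by simp

lemma Q_path_fibre_eq:
  assumes E: "E \<subseteq> evens n"
  shows "{A \<in> Q_path n. A \<inter> evens n = E} = (\<union>) E ` Pow (free_odds n E)"
proof (rule set_eqI, rule iffI)
  fix A assume "A \<in> {A \<in> Q_path n. A \<inter> evens n = E}"
  then have A: "A \<in> Q_path n" and AE: "A \<inter> evens n = E" by auto
  have "A - evens n \<subseteq> free_odds n E"
  proof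
    fix i assume i: "i \<in> A - evens n"
    then have "1 \<le> i" "i \<le> n" "odd i" "Suc i \<notin> A"
      using A unfolding Q_path_eq evens_def by auto
    moreover have "i - 1 \<notin> A"
    proof
      assume "i - 1 \<in> A"
      moreover have "Suc (i - 1) = i" using \<open>1 \<le> i\<close> by simp
      ultimately show False using A i unfolding Q_path_eq by force
    qed
    ultimately show "i \<in> free_odds n E"
      using AE unfolding free_odds_def by auto
  qed
  moreover have "A = E \<union> (A - evens n)" using AE by auto
  ultimately show "A \<in> (\<union>) E ` Pow (free_odds n E)" by blast
next
  fix A assume "A \<in> (\<union>) E ` Pow (free_odds n E)"
  then obtain T where T: "T \<subseteq> free_odds n E" and A: "A = E \<union> T" by auto
  have Eev: "\<And>i. i \<in> E \<Longrightarrow> even i \<and> 1 \<le> i \<and> i \<le> n"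
    using E unfolding evens_def by auto
  have Tod: "\<And>i. i \<in> T \<Longrightarrow> odd i \<and> 1 \<le> i \<and> i \<le> n \<and> i - 1 \<notin> E \<and> Suc i \<notin> E"
    using T unfolding free_odds_def by auto
  have "Suc i \<notin> A" if "i \<in> A" for i
  proof
    assume "Suc i \<in> A"
    show False
    proof (cases "i \<in> E")
      case True
      then have "Suc i \<in> T"
        using \<open>Suc i \<in> A\<close> A Eev[of i] Eev[of "Suc i"] by auto
      then show False using Tod True by fastforce
    next
      case False
      then have "i \<in> T" "Suc i \<notin> T"
        using that A Tod[of i] Tod[of "Suc i"] by auto
      then show False using \<open>Suc i \<in> A\<close> A Tod by blast
    qed
  qed
  moreover have "A \<subseteq> {1..n}"
    using A Eev Tod by auto
  moreover have "T \<inter> evens n = {}"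
    using Tod unfolding evens_def by auto
  ultimately show "A \<in> {A \<in> Q_path n. A \<inter> evens n = E}"
    using A E unfolding Q_path_eq by auto
qed

lemma inj_on_Un_free_odds: "E \<subseteq> evens n \<Longrightarrow> inj_on ((\<union>) E) (Pow (free_odds n E))"
  by (rule inj_onI) (auto simp: free_odds_def evens_def)

lemma card_Q_path_fibre:
  "E \<subseteq> evens n \<Longrightarrow> card {A \<in> Q_path n. A \<inter> evens n = E} = 2 ^ card (free_odds n E)"
  by (simp add: Q_path_fibre_eq card_image inj_on_Un_free_odds card_Pow finite_free_odds)

lemma card_Q_path_eq_sum_fibres: "card (Q_path n) = (\<Sum>E\<in>Pow (evens n). 2 ^ card (free_odds n E))"
proof -
  have "card (Q_path n) = (\<Sum>E\<in>Pow (evens n). card {A \<in> Q_path n. A \<inter> evens n = E})"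
    by (rule card_eq_sum_card_fibres) (auto simp: finite_Q_path finite_evens)
  then show ?thesis
    by (simp add: card_Q_path_fibre)
qed

lemma card_antichain_fibre_le:
  assumes F: "is_antichain_in F (Q_path n)" and E: "E \<subseteq> evens n"
  shows "card {A \<in> F. A \<inter> evens n = E} \<le> card (free_odds n E) choose (card (free_odds n E) div 2)"
proof -
  define T where "T = {X \<in> Pow (free_odds n E). E \<union> X \<in> F}"
  have fibre: "{A \<in> Q_path n. A \<inter> evens n = E} = (\<union>) E ` Pow (free_odds n E)"
    by (rule Q_path_fibre_eq[OF E])
  have FQ: "F \<subseteq> Q_path n"
    using F by (simp add: is_antichain_in_def)
  have "{A \<in> F. A \<inter> evens n = E} = (\<union>) E ` T"
  proof (intro equalityI subsetI)
    fix A assume A: "A \<in> {A \<in> F. A \<inter> evens n = E}"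
    then have "A \<in> {A \<in> Q_path n. A \<inter> evens n = E}"
      using FQ by blast
    then obtain X where "X \<in> Pow (free_odds n E)" "A = E \<union> X"
      unfolding fibre by blast
    then show "A \<in> (\<union>) E ` T"
      using A unfolding T_def by blast
  next
    fix A assume "A \<in> (\<union>) E ` T"
    then obtain X where "X \<in> Pow (free_odds n E)" "A = E \<union> X" "A \<in> F"
      unfolding T_def by blast
    moreover from this have "A \<in> {A \<in> Q_path n. A \<inter> evens n = E}"
      unfolding fibre by blast
    ultimately show "A \<in> {A \<in> F. A \<inter> evens n = E}"
      by blast
  qed
  moreover have "inj_on ((\<union>) E) T"
    using inj_on_Un_free_odds[OF E] by (rule inj_on_subset) (auto simp: T_def)
  ultimately have "card {A \<in> F. A \<inter> evens n = E} = card T"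
    by (simp add: card_image)
  also have "\<dots> \<le> card (free_odds n E) choose (card (free_odds n E) div 2)"
  proof (rule sperner[OF finite_free_odds])
    have "\<not> X \<subset> Y" if "X \<in> T" "Y \<in> T" for X Y
    proof
      assume "X \<subset> Y"
      moreover have "Y \<inter> E = {}"
        using that E by (auto simp: T_def free_odds_def evens_def)
      ultimately have "E \<union> X \<subset> E \<union> Y"
        by blast
      then show False
        using that F by (simp add: T_def is_antichain_in_def)
    qed
    then show "is_antichain_in T (Pow (free_odds n E))"
      by (auto simp: is_antichain_in_def T_def)
  qed
  finally show ?thesis .
qed

lemma card_antichain_le_sum_fibres:
  assumes "is_antichain_in F (Q_path n)"
  shows "card F \<le> (\<Sum>E\<in>Pow (evens n). card (free_odds n E) choose (card (free_odds n E) div 2))"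
proof -
  have "finite F"
    using assms finite_subset[OF _ finite_Q_path] unfolding is_antichain_in_def by blast
  then have "card F = (\<Sum>E\<in>Pow (evens n). card {A \<in> F. A \<inter> evens n = E})"
    by (rule card_eq_sum_card_fibres) (auto simp: finite_evens)
  also have "\<dots> \<le> (\<Sum>E\<in>Pow (evens n). card (free_odds n E) choose (card (free_odds n E) div 2))"
    using card_antichain_fibre_le[OF assms] by (intro sum_mono) simp
  finally show ?thesis .
qed

section \<open>Concentration of the layer sizes\<close>

lemma binomial_diagonal_step:
  assumes "k + 1 \<le> m"
  shows "((m - 1) choose (k + 1)) * (k + 1) * m = (m choose k) * (m - k) * (m - k - 1)"
proof -
  obtain j where j: "m = Suc j" using assms by (cases m) auto
  have "((m - 1) choose (k + 1)) * (k + 1) * m = (Suc k * (j choose Suc k)) * m"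
    using j by (simp add: mult.commute)
  also have "\<dots> = (j - k) * (m * (j choose k))"
    using binomial_absorption[of k j] binomial_absorb_comp[of j k] by (simp add: algebra_simps)
  also have "\<dots> = (j - k) * ((m - k) * (m choose k))"
    using binomial_absorb_comp[of m k] j by simp
  also have "\<dots> = (m choose k) * (m - k) * (m - k - 1)"
    using j by (simp add: algebra_simps)
  finally show ?thesis .
qed

lemma ratio_shift_le:
  fixes X Y p l N :: real
  assumes "0 \<le> l" "2 * l \<le> X" "X \<le> 2 * Y" "l < Y" "0 < p" "X + 1 \<le> N"
  shows "(X + 1 - 2*l) * (X - 2*l) / ((p + l) * (Y - l)) \<le> (1 - 2*l / N) * ((X + 1) * X / (p * Y))"
proof -
  have f1: "X + 1 - 2*l \<le> (1 - 2*l / N) * (X + 1)"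
  proof -
    have "2*l / N * (X + 1) \<le> 2*l"
      using assms by (simp add: divide_simps mult_left_mono)
    then show ?thesis
      by (simp add: algebra_simps)
  qed
  have f2: "(X - 2*l) / (Y - l) \<le> X / Y"
    using assms mult_right_mono[OF assms(3,1)] by (simp add: divide_simps algebra_simps)
  have f3: "1 / (p + l) \<le> 1 / p"
    using assms by (simp add: divide_simps)
  have "(X + 1 - 2*l) * (X - 2*l) / ((p + l) * (Y - l))
      = (X + 1 - 2*l) * ((X - 2*l) / (Y - l)) * (1 / (p + l))"
    by (simp add: divide_inverse mult_ac)
  also have "\<dots> \<le> (1 - 2*l / N) * (X + 1) * (X / Y) * (1 / p)"
    using f1 f2 f3 assms by (intro mult_mono) auto
  also have "\<dots> = (1 - 2*l / N) * ((X + 1) * X / (p * Y))"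
    by (simp add: divide_inverse mult_ac)
  finally show ?thesis .
qed

definition layer :: "nat \<Rightarrow> nat \<Rightarrow> real" where
  "layer n r = real ((n + 1 - r) choose r)"

lemma layer_eq_card: "layer n r = real (card (Q_path_r n r))"
  unfolding layer_def card_Q_path_r by simp

definition layer_ratio :: "nat \<Rightarrow> nat \<Rightarrow> real" where
  "layer_ratio n r = ((real n + 1 - 2 * real r) * (real n - 2 * real r)) / ((real r + 1) * (real n + 1 - real r))"

lemma layer_0 [simp]: "layer n 0 = 1"
  unfolding layer_def by simp

lemma layer_nonneg: "layer n r \<ge> 0"
  unfolding layer_def by simp

lemma layer_pos: "2 * r \<le> n + 1 \<Longrightarrow> layer n r > 0"
  unfolding layer_def by simp

lemma layer_eq_0: "n + 1 < 2 * r \<Longrightarrow> layer n r = 0"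
  unfolding layer_def by simp

lemma layer_Suc:
  assumes "2 * r \<le> n"
  shows "layer n (Suc r) = layer_ratio n r * layer n r"
proof -
  let ?m = "n + 1 - r"
  have "((?m - 1) choose (r + 1)) * (r + 1) * ?m = (?m choose r) * (?m - r) * (?m - r - 1)"
    using assms by (intro binomial_diagonal_step) simp
  then have "real ((?m - 1) choose (r + 1)) * (real r + 1) * real ?m
      = real (?m choose r) * real (?m - r) * real (?m - r - 1)"
    by (metis of_nat_mult of_nat_Suc Suc_eq_plus1 add.commute)
  moreover have "?m - 1 = n + 1 - Suc r" "real (?m - r) = real n + 1 - 2 * real r"
    "real (?m - r - 1) = real n - 2 * real r" "real ?m = real n + 1 - real r"
    using assms by auto
  ultimately have "layer n (Suc r) * ((real r + 1) * (real n + 1 - real r)) =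
      layer n r * ((real n + 1 - 2 * real r) * (real n - 2 * real r))"
    unfolding layer_def by (simp only: mult.assoc Suc_eq_plus1)
  moreover have "(real r + 1) * (real n + 1 - real r) > 0"
    using assms by simp
  ultimately show ?thesis
    unfolding layer_ratio_def by (simp add: field_simps)
qed

lemma layer_ratio_nonneg: "2 * r \<le> n \<Longrightarrow> layer_ratio n r \<ge> 0"
  unfolding layer_ratio_def by (intro divide_nonneg_pos mult_nonneg_nonneg mult_pos_pos) auto

lemma layer_ratio_add_le:
  assumes "2 * (r + L) \<le> n"
  shows "layer_ratio n (r + L) \<le> (1 - 2 * real L / (real n + 1)) * layer_ratio n r"
  using ratio_shift_le[of "real L" "real n - 2 * real r" "real n + 1 - real r" "real r + 1" "real n + 1"] assms
  unfolding layer_ratio_def by (simp add: algebra_simps)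

lemma layer_ratio_mono:
  assumes "r \<le> s" "2 * s \<le> n"
  shows "layer_ratio n s \<le> layer_ratio n r"
proof -
  have "layer_ratio n (r + (s - r)) \<le> (1 - 2 * real (s - r) / (real n + 1)) * layer_ratio n r"
    using assms by (intro layer_ratio_add_le) simp
  also have "\<dots> \<le> layer_ratio n r"
    using assms layer_ratio_nonneg[of r n] by (intro mult_left_le_one_le) simp_all
  finally show ?thesis
    using assms by simp
qed

lemma geometric_sum_shift_le:
  fixes x :: real
  assumes "0 \<le> x" "x < 1"
  shows "(\<Sum>i<N. x ^ (i - c)) \<le> real c + 1 / (1 - x)"
proof -
  have "(\<Sum>i<N. x ^ (i - c)) \<le> real (min N c) + (1 - x ^ (N - c)) / (1 - x)"
  proof (induction N)
    case (Suc N)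
    show ?case
    proof (cases "N < c")
      case True
      then show ?thesis using Suc.IH by simp
    next
      case False
      then have "Suc N - c = Suc (N - c)" by simp
      then have "(1 - x ^ (N - c)) / (1 - x) + x ^ (N - c) = (1 - x ^ (Suc N - c)) / (1 - x)"
        using assms by (simp add: field_simps)
      then show ?thesis using Suc.IH False by simp
    qed
  qed simp
  also have "\<dots> \<le> real c + 1 / (1 - x)"
    using assms by (intro add_mono divide_right_mono) simp_all
  finally show ?thesis .
qed

lemma sum_le_geometric_tails:
  fixes a :: "nat \<Rightarrow> real"
  assumes x: "0 \<le> x" "x < 1" and M: "0 \<le> M" "\<And>r. a r \<le> M" and "m \<le> n"
    and above: "\<And>j. m + L \<le> j \<Longrightarrow> a (Suc j) \<le> x * a j"
    and below: "\<And>j. j + L < m \<Longrightarrow> a j \<le> x * a (Suc j)"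
  shows "(\<Sum>r\<le>n. a r) \<le> 2 * M * (real L + 1 / (1 - x))"
proof -
  have above_tail: "a (m + L + i) \<le> M * x ^ i" for i
  proof (induction i)
    case (Suc i)
    have "a (m + L + Suc i) \<le> x * a (m + L + i)"
      using above[of "m + L + i"] by simp
    also have "\<dots> \<le> M * x ^ Suc i"
      using mult_left_mono[OF Suc.IH x(1)] by (simp add: mult_ac)
    finally show ?case .
  qed (use M in simp)
  have below_tail: "i + L \<le> m \<Longrightarrow> a (m - L - i) \<le> M * x ^ i" for i
  proof (induction i)
    case (Suc i)
    have "a (m - L - Suc i) \<le> x * a (Suc (m - L - Suc i))"
      using Suc.prems by (intro below) simp
    also have "Suc (m - L - Suc i) = m - L - i"
      using Suc.prems by simp
    also have "x * a (m - L - i) \<le> M * x ^ Suc i"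
      using mult_left_mono[OF Suc.IH x(1)] Suc.prems by (simp add: mult_ac)
    finally show ?case .
  qed (use M in simp)
  have G: "(\<Sum>i<N. x ^ (i - L)) \<le> real L + 1 / (1 - x)" for N
    by (rule geometric_sum_shift_le[OF x])
  have "(\<Sum>r<m. a r) \<le> (\<Sum>r<m. M * x ^ ((m - L) - r))"
  proof (rule sum_mono)
    fix r assume "r \<in> {..<m}"
    show "a r \<le> M * x ^ ((m - L) - r)"
      using below_tail[of "(m - L) - r"] M by (cases "r + L \<le> m") auto
  qed
  also have "\<dots> = (\<Sum>i<m. M * x ^ ((m - L) - (m - Suc i)))"
    by (rule sum.nat_diff_reindex[symmetric])
  also have "\<dots> \<le> (\<Sum>i<m. M * x ^ (i - L))"
    using x M by (intro sum_mono mult_left_mono power_decreasing) auto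
  also have "\<dots> \<le> M * (real L + 1 / (1 - x))"
    using G M by (simp add: sum_distrib_left[symmetric] mult_left_mono)
  finally have low: "(\<Sum>r<m. a r) \<le> M * (real L + 1 / (1 - x))" .
  have "(\<Sum>r\<in>{m..n}. a r) \<le> (\<Sum>r\<in>{m..n}. M * x ^ (r - (m + L)))"
  proof (rule sum_mono)
    fix r assume "r \<in> {m..n}"
    then show "a r \<le> M * x ^ (r - (m + L))"
      using above_tail[of "r - (m + L)"] M by (cases "m + L \<le> r") auto
  qed
  also have "\<dots> = (\<Sum>i<Suc (n - m). M * x ^ (i - L))"
    using \<open>m \<le> n\<close> by (intro sum.reindex_bij_witness[of _ "\<lambda>i. i + m" "\<lambda>r. r - m"]) auto
  also have "\<dots> \<le> M * (real L + 1 / (1 - x))"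
    using G[of "Suc (n - m)"] M by (simp add: sum_distrib_left[symmetric] mult_left_mono del: sum.lessThan_Suc)
  finally have high: "(\<Sum>r\<in>{m..n}. a r) \<le> M * (real L + 1 / (1 - x))" .
  have "{..n} = {..<m} \<union> {m..n}"
    using \<open>m \<le> n\<close> by auto
  then have "(\<Sum>r\<le>n. a r) = (\<Sum>r<m. a r) + (\<Sum>r\<in>{m..n}. a r)"
    by (simp add: sum.union_disjoint ivl_disj_int_one(4))
  then show ?thesis
    using low high by simp
qed

lemma layer_mode_bound:
  assumes "\<And>r. layer n r \<le> layer n m"
  shows "1 \<le> layer n m" "2 * m \<le> n + 1"
proof -
  show "1 \<le> layer n m"
    using assms[of 0] by simp
  then show "2 * m \<le> n + 1"
    using layer_eq_0[of n m] by fastforce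
qed

lemma layer_decay_above:
  assumes max: "\<And>r. layer n r \<le> layer n m" and "2 * L \<le> n + 1" and j: "m + L \<le> j"
  shows "layer n (Suc j) \<le> (1 - 2 * real L / (real n + 1)) * layer n j"
proof (cases "2 * j \<le> n")
  case True
  have "layer_ratio n m * layer n m \<le> 1 * layer n m"
    using max[of "Suc m"] layer_Suc[of m n] True j by simp
  then have "layer_ratio n m \<le> 1"
    using layer_mode_bound[OF max] by simp
  have "layer_ratio n j \<le> (1 - 2 * real L / (real n + 1)) * layer_ratio n (j - L)"
    using layer_ratio_add_le[of "j - L" L n] True j by simp
  also have "\<dots> \<le> (1 - 2 * real L / (real n + 1)) * 1"
  proof (rule mult_left_mono)
    show "layer_ratio n (j - L) \<le> 1"
    proof -
      have "m \<le> j - L" "2 * (j - L) \<le> n"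
        using True j by auto
      then show ?thesis
        using \<open>layer_ratio n m \<le> 1\<close> layer_ratio_mono[of m "j - L" n] by linarith
    qed
    show "0 \<le> 1 - 2 * real L / (real n + 1)"
      using assms(2) by (simp add: field_simps)
  qed
  finally show ?thesis
    using layer_Suc[OF True] layer_nonneg[of n j] by (simp add: mult_right_mono)
next
  case False
  then show ?thesis
    using layer_eq_0[of n "Suc j"] layer_nonneg[of n j] assms(2) by simp
qed

lemma layer_decay_below:
  assumes max: "\<And>r. layer n r \<le> layer n m" and j: "j + L < m"
  shows "layer n j \<le> (1 - 2 * real L / (real n + 1)) * layer n (Suc j)"
proof -
  have m: "2 * (m - 1) \<le> n"
    using layer_mode_bound(2)[OF max] j by simp
  have "1 * layer n (m - 1) \<le> layer_ratio n (m - 1) * layer n (m - 1)"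
    using max[of "m - 1"] layer_Suc[OF m] j by simp
  then have "1 \<le> layer_ratio n (m - 1)"
    using layer_pos[of "m - 1" n] m by simp
  also have "\<dots> \<le> layer_ratio n (j + L)"
    using m j by (intro layer_ratio_mono) simp_all
  also have "\<dots> \<le> (1 - 2 * real L / (real n + 1)) * layer_ratio n j"
    using m j by (intro layer_ratio_add_le) simp
  finally have "1 \<le> (1 - 2 * real L / (real n + 1)) * layer_ratio n j" .
  from mult_right_mono[OF this layer_nonneg[of n j]]
  have "layer n j \<le> (1 - 2 * real L / (real n + 1)) * layer_ratio n j * layer n j"
    by simp
  then show ?thesis
    using layer_Suc[of j n] m j by (simp add: mult.assoc)
qed

lemma floor_sqrt_bounds:
  assumes "1 \<le> n"
  defines "L \<equiv> nat \<lfloor>sqrt (real n)\<rfloor>"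
  shows "1 \<le> L" "2 * L \<le> n + 1" "2 * real L + (real n + 1) / real L \<le> 6 * sqrt (real n)"
proof -
  have sq: "1 \<le> sqrt (real n)"
    using assms by simp
  then have L: "real L \<le> sqrt (real n)" "sqrt (real n) < real L + 1"
    unfolding L_def by (simp_all add: of_nat_nat)
  then show "1 \<le> L"
    using sq by linarith
  have "real L * real L \<le> real n"
    using L(1) mult_mono[OF L(1) L(1)] by simp
  moreover have "2 * real L \<le> real L * real L + 1"
    using sum_squares_ge_zero[of "real L - 1" 0] by (simp add: algebra_simps power2_eq_square)
  ultimately show "2 * L \<le> n + 1"
    by linarith
  have "real n \<le> 2 * real L * sqrt (real n)"
    using mult_right_mono[of "sqrt (real n)" "2 * real L" "sqrt (real n)"] L \<open>1 \<le> L\<close> by simp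
  then have "real n + 1 \<le> 4 * real L * sqrt (real n)"
    using sq \<open>1 \<le> L\<close> mult_mono[of 1 "real L" 1 "sqrt (real n)"] by simp
  then have "(real n + 1) / real L \<le> 4 * sqrt (real n)"
    using \<open>1 \<le> L\<close> by (simp add: field_simps)
  then show "2 * real L + (real n + 1) / real L \<le> 6 * sqrt (real n)"
    using L(1) by linarith
qed

lemma sum_layers_le:
  assumes "1 \<le> n" and max: "\<And>r. layer n r \<le> layer n m"
  shows "(\<Sum>r\<le>n. layer n r) \<le> 6 * sqrt (real n) * layer n m"
proof -
  define L where "L = nat \<lfloor>sqrt (real n)\<rfloor>"
  note L = floor_sqrt_bounds[OF \<open>1 \<le> n\<close>, folded L_def]
  define x where "x = 1 - 2 * real L / (real n + 1)"
  have x: "0 \<le> x" "x < 1"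
    using L unfolding x_def by (simp_all add: field_simps)
  have "m \<le> n"
    using layer_mode_bound(2)[OF max] \<open>1 \<le> n\<close> by simp
  have "(\<Sum>r\<le>n. layer n r) \<le> 2 * layer n m * (real L + 1 / (1 - x))"
    using layer_decay_above[OF max L(2)] layer_decay_below[OF max] max layer_nonneg \<open>m \<le> n\<close>
    by (intro sum_le_geometric_tails[OF x]) (auto simp: x_def)
  also have "\<dots> = layer n m * (2 * real L + (real n + 1) / real L)"
    using L(1) unfolding x_def by (simp add: field_simps)
  also have "\<dots> \<le> layer n m * (6 * sqrt (real n))"
    using L(3) layer_nonneg by (rule mult_left_mono)
  finally show ?thesis
    by (simp add: mult_ac)
qed

lemma card_Q_path_eq_sum_layers: "card (Q_path n) = (\<Sum>r\<le>n. card (Q_path_r n r))"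
proof -
  have "card A \<le> n" if "A \<in> Q_path n" for A
    using that Q_path_subset_Pow card_mono[of "{1..n}" A] by auto
  then have "card (Q_path n) = (\<Sum>r\<le>n. card {A \<in> Q_path n. card A = r})"
    by (intro card_eq_sum_card_fibres) (auto simp: finite_Q_path)
  then show ?thesis
    unfolding Q_path_r_def by simp
qed

lemma card_Q_path_le_max_layer:
  assumes "1 \<le> n"
  shows "real (card (Q_path n)) \<le> 6 * sqrt (real n) * Max {card (Q_path_r n r) | r. r \<le> n}"
proof -
  have S: "{card (Q_path_r n r) | r. r \<le> n} = (\<lambda>r. card (Q_path_r n r)) ` {..n}"
    by auto
  have "Max {card (Q_path_r n r) | r. r \<le> n} \<in> (\<lambda>r. card (Q_path_r n r)) ` {..n}"
    unfolding S by (rule Max_in) auto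
  then obtain m where m: "m \<le> n" "card (Q_path_r n m) = Max {card (Q_path_r n r) | r. r \<le> n}"
    by auto
  have max: "layer n r \<le> layer n m" for r
  proof (cases "r \<le> n")
    case True
    then show ?thesis
      unfolding layer_eq_card m(2) S by simp
  next
    case False
    then show ?thesis
      using layer_eq_0[of n r] layer_nonneg assms by simp
  qed
  have "real (card (Q_path n)) = (\<Sum>r\<le>n. layer n r)"
    unfolding card_Q_path_eq_sum_layers layer_eq_card by simp
  also have "\<dots> \<le> 6 * sqrt (real n) * layer n m"
    by (rule sum_layers_le[OF assms max])
  finally show ?thesis
    unfolding layer_eq_card m(2) .
qed

lemma middle_binomial_le_split:
  assumes "1 \<le> n"
  shows "real (d choose (d div 2)) \<le> sqrt 8 / sqrt (real n) * 2 ^ d + 2 ^ (n div 8)"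
proof (cases "n \<le> 8 * d")
  case True
  have "sqrt (real n) \<le> sqrt 8 * sqrt (real d + 1)"
    using True by (simp add: real_sqrt_mult[symmetric])
  then have "2 ^ d / sqrt (real d + 1) \<le> sqrt 8 / sqrt (real n) * 2 ^ d"
    using assms by (simp add: field_simps)
  then show ?thesis
    using middle_binomial_le[of d] by (simp add: add_increasing2)
next
  case False
  have "real (d choose (d div 2)) \<le> 2 ^ d"
    using binomial_le_pow2[of d "d div 2"] by (metis of_nat_le_iff of_nat_numeral of_nat_power)
  also have "(2::real) ^ d \<le> 2 ^ (n div 8)"
    using False by (intro power_increasing) auto
  finally show ?thesis
    by (simp add: add_increasing)
qed

lemma two_pow_mul_sqrt_le: "2 ^ (n div 2 + n div 8) * sqrt (real n) \<le> 256 * (8/5::real) ^ n"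
proof -
  define t where "t = n div 8"
  have "(2::real) ^ (n div 2 + n div 8) \<le> 2 ^ (5 * t + 3)"
    unfolding t_def by (intro power_increasing) linarith+
  also have "\<dots> = 8 * 32 ^ t"
    by (simp add: power_add power_mult)
  finally have T: "(2::real) ^ (n div 2 + n div 8) \<le> 8 * 32 ^ t" .
  have "sqrt (real n) \<le> real n"
    using real_sqrt_le_mono[of "real n" "real n * real n"] by (cases "n = 0") simp_all
  also have "\<dots> \<le> 8 * (real t + 1)"
  proof -
    have "n \<le> 8 * (t + 1)"
      unfolding t_def by presburger
    then have "real n \<le> real (8 * (t + 1))"
      by (simp only: of_nat_le_iff)
    then show ?thesis
      by simp
  qed
  finally have sq: "sqrt (real n) \<le> 8 * (real t + 1)" .
  have "1 + real t * (5/16) \<le> (1 + 5/16::real) ^ t"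
    by (rule Bernoulli_inequality) simp
  then have "(real t + 1) * 32 ^ t \<le> 4 * (21/16::real) ^ t * 32 ^ t"
    by (intro mult_right_mono) simp_all
  also have "\<dots> = 4 * 42 ^ t"
    by (simp add: power_mult_distrib[symmetric])
  finally have B: "(real t + 1) * 32 ^ t \<le> 4 * 42 ^ t" .
  have "(42::real) ^ t \<le> ((8/5) ^ 8) ^ t"
    by (intro power_mono) (simp_all add: power_numeral_reduce)
  also have "\<dots> \<le> (8/5) ^ n"
    unfolding power_mult[symmetric] t_def by (intro power_increasing) simp_all
  finally have P: "(42::real) ^ t \<le> (8/5) ^ n" .
  have "2 ^ (n div 2 + n div 8) * sqrt (real n) \<le> (8 * 32 ^ t) * (8 * (real t + 1))"
    using T sq by (intro mult_mono) simp_all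
  also have "\<dots> = 64 * ((real t + 1) * 32 ^ t)"
    by (simp add: algebra_simps)
  also have "\<dots> \<le> 256 * (8/5) ^ n"
    using B P by simp
  finally show ?thesis .
qed

lemma s_path_le_sum_middle_binomials:
  "s_path n \<le> (\<Sum>E\<in>Pow (evens n). card (free_odds n E) choose (card (free_odds n E) div 2))"
proof -
  let ?S = "{card F | F. is_antichain_in F (Q_path n)}"
  have "?S \<subseteq> {..card (Q_path n)}"
    using card_mono[OF finite_Q_path] by (auto simp: is_antichain_in_def)
  then have "finite ?S"
    by (rule finite_subset) simp
  moreover have "is_antichain_in {} (Q_path n)"
    by (simp add: is_antichain_in_def)
  ultimately show ?thesis
    unfolding s_path_def using card_antichain_le_sum_fibres by (subst Max_le_iff) blast+
qed

lemma s_path_le_card_Q_path: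
  assumes "1 \<le> n"
  shows "real (s_path n) \<le> sqrt 8 / sqrt (real n) * real (card (Q_path n)) + 2 ^ (n div 2 + n div 8)"
proof -
  have "real (s_path n)
      \<le> real (\<Sum>E\<in>Pow (evens n). card (free_odds n E) choose (card (free_odds n E) div 2))"
    using s_path_le_sum_middle_binomials by (simp only: of_nat_le_iff)
  also have "\<dots> \<le> (\<Sum>E\<in>Pow (evens n). sqrt 8 / sqrt (real n) * 2 ^ card (free_odds n E) + 2 ^ (n div 8))"
    unfolding of_nat_sum by (intro sum_mono middle_binomial_le_split[OF assms])
  also have "\<dots> = sqrt 8 / sqrt (real n) * (\<Sum>E\<in>Pow (evens n). 2 ^ card (free_odds n E))
      + 2 ^ (n div 2 + n div 8)"
    using finite_evens by (simp add: sum.distrib sum_distrib_left card_Pow card_evens power_add)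
  also have "(\<Sum>E\<in>Pow (evens n). (2::real) ^ card (free_odds n E)) = real (card (Q_path n))"
    unfolding card_Q_path_eq_sum_fibres by simp
  finally show ?thesis .
qed

theorem mainTheorem1:
  shows "\<exists>C::real. C > 1 \<and> (\<forall>n::nat. n \<ge> 1 \<longrightarrow>
           real (s_path n) \<le> C * real (Max {card (Q_path_r n r) | r. r \<le> n}))"
proof (intro exI[of _ 1600] conjI allI impI)
  fix n :: nat assume "n \<ge> 1"
  define M where "M = real (Max {card (Q_path_r n r) | r. r \<le> n})"
  have sqrt_n: "sqrt (real n) > 0"
    using \<open>n \<ge> 1\<close> by simp
  have Q: "real (card (Q_path n)) \<le> 6 * sqrt (real n) * M"
    unfolding M_def by (rule card_Q_path_le_max_layer[OF \<open>n \<ge> 1\<close>])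
  have "sqrt 8 / sqrt (real n) * real (card (Q_path n)) \<le> 6 * sqrt 8 * M"
    using mult_left_mono[OF Q, of "sqrt 8 / sqrt (real n)"] sqrt_n by simp
  also have "\<dots> \<le> 18 * M"
    using real_le_lsqrt[of 3 8] M_def by (intro mult_right_mono) simp_all
  finally have blocks: "sqrt 8 / sqrt (real n) * real (card (Q_path n)) \<le> 18 * M" .
  have "2 ^ (n div 2 + n div 8) * sqrt (real n) \<le> 256 * real (card (Q_path n))"
    using two_pow_mul_sqrt_le[of n] card_Q_path_ge[of n] by simp
  also have "\<dots> \<le> (1536 * M) * sqrt (real n)"
    using Q by (simp add: mult_ac)
  finally have tail: "2 ^ (n div 2 + n div 8) \<le> 1536 * M"
    using sqrt_n by simp
  show "real (s_path n) \<le> 1600 * M"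
    using s_path_le_card_Q_path[OF \<open>n \<ge> 1\<close>] blocks tail M_def by linarith
qed simp

end
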